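(* Let $\widetilde\nabla$ be the canonical snm-connection on $\mathbb R^3$ determined by $\mathsf C=\partial_z$. There exist $\varepsilon>0$ and a function $f:[0,\varepsilon)\to\mathbb R$, smooth up to $0$, with $f'(0)=0$, such that the rotational surface about the $z$-axis generated by the graph $z=f(x)$, $0<x<\varepsilon$, namely $\{(x\cos t,x\sin t,f(x)):0<x<\varepsilon,\ t\in\mathbb R\}$, has constant sectional curvature $K\equiv\tfrac12$ with respect to $\widetilde\nabla$; in particular its closure meets the rotation axis orthogonally.
   Context: Let $\langle\cdot,\cdot\rangle$ be the Euclidean metric on $\mathbb R^3$ and $\widetilde\nabla^0$ its Levi-Civita connection (the ordinary directional derivative). Given a smooth vector field $\mathsf C$ on $\mathbb R^3$, the semi-symmetric non-metric connection (snm-connection) determined by $\mathsf C$ is $\widetilde\nabla_XY=\widetilde\nabla^0_XY+\langle \mathsf C,Y\rangle X$. Its curvature tensor is $\widetilde R(X,Y)Z=\widetilde\nabla_X\widetilde\nabla_YZ-\widetilde\nabla_Y\widetilde\nabla_XZ-\widetilde\nabla_{[X,Y]}Z$. For a surface $M$ immersed in $\mathbb R^3$, the induced connection is $\nabla_XY=(\widetilde\nabla_XY)^{\top}$ (tangential component), with curvature tensor $R$ defined by the same formula, and the sectional curvature of $M$ with respect to $\widetilde\nabla$ at $p$ is $K(p)=\frac12\big(\langle R(e_1,e_2)e_2,e_1\rangle+\langle R(e_2,e_1)e_1,e_2\rangle\big)$ for an orthonormal basis $\{e_1,e_2\}$ of $T_pM$. *)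

theory Defs
  imports "HOL-Analysis.Analysis" "HOL-Analysis.Cross3"
begin

text \<open>
  The ambient snm-connection is
    nabla~_Y W = D_Y W + <C, W> Y,
  and the induced connection is its tangential part.
\<close>

definition pd1 :: "(real \<Rightarrow> real \<Rightarrow> real^3) \<Rightarrow> real \<Rightarrow> real \<Rightarrow> real^3" where
  "pd1 F u v = vector_derivative (\<lambda>s. F s v) (at u)"

definition pd2 :: "(real \<Rightarrow> real \<Rightarrow> real^3) \<Rightarrow> real \<Rightarrow> real \<Rightarrow> real^3" where
  "pd2 F u v = vector_derivative (\<lambda>s. F u s) (at v)"

definition unit_normal :: "(real \<Rightarrow> real \<Rightarrow> real^3) \<Rightarrow> real \<Rightarrow> real \<Rightarrow> real^3" where
  "unit_normal X u v = (1 / norm (cross3 (pd1 X u v) (pd2 X u v))) *\<^sub>R cross3 (pd1 X u v) (pd2 X u v)"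

definition tang :: "(real \<Rightarrow> real \<Rightarrow> real^3) \<Rightarrow> real \<Rightarrow> real \<Rightarrow> real^3 \<Rightarrow> real^3" where
  "tang X u v w = w - (w \<bullet> unit_normal X u v) *\<^sub>R unit_normal X u v"

definition coord_field :: "(real \<Rightarrow> real \<Rightarrow> real^3) \<Rightarrow> real \<Rightarrow> real \<Rightarrow> real \<Rightarrow> real \<Rightarrow> real^3" where
  "coord_field X a b = (\<lambda>u v. a *\<^sub>R pd1 X u v + b *\<^sub>R pd2 X u v)"

definition ind_conn ::
  "(real^3 \<Rightarrow> real^3) \<Rightarrow> (real \<Rightarrow> real \<Rightarrow> real^3) \<Rightarrow> real \<Rightarrow> real \<Rightarrow>
     (real \<Rightarrow> real \<Rightarrow> real^3) \<Rightarrow> real \<Rightarrow> real \<Rightarrow> real^3" where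
  "ind_conn C X a b W = (\<lambda>u v.
      tang X u v (a *\<^sub>R pd1 W u v + b *\<^sub>R pd2 W u v
                  + (C (X u v) \<bullet> W u v) *\<^sub>R coord_field X a b u v))"

text \<open>Curvature R(Y,Z)W = nabla_Y nabla_Z W - nabla_Z nabla_Y W - nabla_[Y,Z] W for the
  commuting fields Y = a X_u + b X_v, Z = c X_u + d X_v (so [Y,Z] = 0).  By tensoriality its
  value at a point only depends on the values of Y, Z, W there.\<close>
definition ind_curv ::
  "(real^3 \<Rightarrow> real^3) \<Rightarrow> (real \<Rightarrow> real \<Rightarrow> real^3) \<Rightarrow> real \<Rightarrow> real \<Rightarrow> real \<Rightarrow> real \<Rightarrow>
     (real \<Rightarrow> real \<Rightarrow> real^3) \<Rightarrow> real \<Rightarrow> real \<Rightarrow> real^3" where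
  "ind_curv C X a b c d W =
     (\<lambda>u v. ind_conn C X a b (ind_conn C X c d W) u v - ind_conn C X c d (ind_conn C X a b W) u v)"

definition sect_curv_expr ::
  "(real^3 \<Rightarrow> real^3) \<Rightarrow> (real \<Rightarrow> real \<Rightarrow> real^3) \<Rightarrow> real \<Rightarrow> real \<Rightarrow> real \<Rightarrow> real \<Rightarrow> real \<Rightarrow> real \<Rightarrow> real" where
  "sect_curv_expr C X a b c d u v =
     (1/2) * (ind_curv C X a b c d (coord_field X c d) u v \<bullet> coord_field X a b u v
            + ind_curv C X c d a b (coord_field X a b) u v \<bullet> coord_field X c d u v)"

definition const_sect_curv ::
  "(real^3 \<Rightarrow> real^3) \<Rightarrow> (real \<Rightarrow> real \<Rightarrow> real^3) \<Rightarrow> (real \<times> real) set \<Rightarrow> real \<Rightarrow> bool" where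
  "const_sect_curv C X U k \<longleftrightarrow>
     (\<forall>(u,v)\<in>U. \<forall>a b c d.
        (coord_field X a b u v \<bullet> coord_field X a b u v = 1 \<and>
         coord_field X c d u v \<bullet> coord_field X c d u v = 1 \<and>
         coord_field X a b u v \<bullet> coord_field X c d u v = 0)
        \<longrightarrow> sect_curv_expr C X a b c d u v = k)"

definition e_z :: "real^3 \<Rightarrow> real^3" where
  "e_z p = vector [0, 0, 1]"

definition rot_surface :: "(real \<Rightarrow> real) \<Rightarrow> real \<Rightarrow> real \<Rightarrow> real^3" where
  "rot_surface f x t = vector [x * cos t, x * sin t, f x]"

definition smooth_upto0 :: "real \<Rightarrow> (real \<Rightarrow> real) \<Rightarrow> (nat \<Rightarrow> real \<Rightarrow> real) \<Rightarrow> bool" where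
  "smooth_upto0 eps f Df \<longleftrightarrow>
     (\<forall>x\<in>{0..<eps}. Df 0 x = f x) \<and>
     (\<forall>n. \<forall>x\<in>{0..<eps}. (Df n has_real_derivative Df (Suc n) x) (at x within {0..<eps}))"

end

theory Submission
  imports Defs
begin

text \<open>For \<open>X(u, v) = (u cos v, u sin v, f u)\<close>, computing the induced connection in the frame
  \<open>X\<^sub>u, X\<^sub>v\<close> shows that the sectional curvature equals \<open>1/2\<close> exactly when \<open>g = f'\<close> satisfies
  \<open>g' (2 g - u) = (u + g) (1 + g\<^sup>2)\<close>.  This equation is singular at \<open>u = 0\<close>, but it has a formal
  power series solution \<open>g = \<Sum> c\<^sub>k u\<^sup>k\<close> with \<open>c\<^sub>0 = 0\<close>: comparing coefficients forces
  \<open>c\<^sub>1 (2 c\<^sub>1 - 1) = c\<^sub>1 + 1\<close> and then determines each \<open>c\<^sub>n\<close> from the earlier ones, because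
  \<open>c\<^sub>n\<close> enters the \<open>n\<close>-th coefficient with the nonzero factor \<open>(n + 1) (2 c\<^sub>1 - 1)\<close>.
  Choosing \<open>c\<^sub>1 = (1 - \<surd>3)/2\<close>, a majorant argument shows that
  \<open>S N = (\<Sum>k = 2..<N. |c\<^sub>k| / 10^k)\<close> stays below \<open>1/1000\<close>, since the recursion
  bounds \<open>S (N + 1)\<close> by a cubic polynomial in \<open>S N\<close>.  Hence the series converges for \<open>|u| < 1/10\<close>,
  and its antiderivative \<open>f\<close> is the required profile, smooth up to \<open>0\<close> with \<open>f'(0) = 0\<close>.\<close>

definition cauchy_conv :: "(nat \<Rightarrow> real) \<Rightarrow> (nat \<Rightarrow> real) \<Rightarrow> nat \<Rightarrow> real" where
  "cauchy_conv u v n = (\<Sum>i\<le>n. u i * v (n - i))"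

lemma cauchy_conv_nonneg: "(\<And>k. 0 \<le> u k) \<Longrightarrow> (\<And>k. 0 \<le> v k) \<Longrightarrow> 0 \<le> cauchy_conv u v n"
  unfolding cauchy_conv_def by (intro sum_nonneg mult_nonneg_nonneg) auto

lemma cauchy_conv_mono:
  assumes "\<And>k. 0 \<le> u k" "\<And>k. u k \<le> u' k" "\<And>k. 0 \<le> v k" "\<And>k. v k \<le> v' k"
  shows "cauchy_conv u v n \<le> cauchy_conv u' v' n"
  unfolding cauchy_conv_def
  by (intro sum_mono mult_mono) (auto intro: order_trans[OF assms(1) assms(2)] assms)

lemma abs_cauchy_conv_le: "\<bar>cauchy_conv u v n\<bar> \<le> cauchy_conv (\<lambda>k. \<bar>u k\<bar>) (\<lambda>k. \<bar>v k\<bar>) n"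
  unfolding cauchy_conv_def by (rule order_trans[OF sum_abs]) (simp add: abs_mult)

lemma abs_cauchy_conv_le_sum: "\<bar>cauchy_conv u v n\<bar> \<le> (\<Sum>i\<le>n. \<bar>u i * v (n - i)\<bar>)"
  unfolding cauchy_conv_def by (rule sum_abs)

lemma cauchy_conv_mult_power:
  "cauchy_conv (\<lambda>k. u k * x^k) (\<lambda>k. v k * x^k) n = cauchy_conv u v n * x^n"
  unfolding cauchy_conv_def sum_distrib_right
proof (rule sum.cong[OF refl])
  fix i assume "i \<in> {..n}"
  then have "x^i * x^(n-i) = x^n" by (simp add: power_add[symmetric])
  then show "u i * x^i * (v (n - i) * x^(n - i)) = u i * v (n - i) * x^n"
    by (metis mult.assoc mult.left_commute)
qed

lemma sum_cauchy_conv_le: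
  assumes u: "\<And>k. 0 \<le> u k" and v: "\<And>k. 0 \<le> v k"
  shows "(\<Sum>n\<le>N. cauchy_conv u v n) \<le> (\<Sum>k\<le>N. u k) * (\<Sum>k\<le>N. v k)"
proof -
  have "(\<Sum>n\<le>N. cauchy_conv u v n) = (\<Sum>(i,j)\<in>{(i,j). i+j \<le> N}. u i * v j)"
    unfolding cauchy_conv_def by (rule sum.triangle_reindex_eq[symmetric])
  also have "\<dots> \<le> (\<Sum>(i,j)\<in>{..N}\<times>{..N}. u i * v j)"
    by (rule sum_mono2) (auto intro!: mult_nonneg_nonneg u v)
  also have "\<dots> = (\<Sum>k\<le>N. u k) * (\<Sum>k\<le>N. v k)"
    by (simp add: sum_product sum.cartesian_product)
  finally show ?thesis .
qed

lemma cauchy_conv_diff: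
  "cauchy_conv u v n - cauchy_conv u' v' n = (\<Sum>i\<le>n. u i * v (n - i) - u' i * v' (n - i))"
  by (simp add: cauchy_conv_def sum_subtractf)

definition trunc_seq :: "(nat \<Rightarrow> real) \<Rightarrow> nat \<Rightarrow> nat \<Rightarrow> real" where
  "trunc_seq c n = (\<lambda>k. if k < n then c k else 0)"

lemma cauchy_conv_trunc_seq:
  assumes "c 0 = 0" "m \<le> n"
  shows "cauchy_conv (trunc_seq c n) (trunc_seq c n) m = cauchy_conv c c m"
  unfolding cauchy_conv_def
proof (rule sum.cong[OF refl])
  fix i assume "i \<in> {..m}"
  then show "trunc_seq c n i * trunc_seq c n (m - i) = c i * c (m - i)"
    using assms by (cases "i = 0"; cases "i = n") (auto simp: trunc_seq_def)
qed

text \<open>The \<open>n\<close>-th Taylor coefficient of \<open>g' (2 g - x) - (x + g) (1 + g\<^sup>2)\<close> for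
  \<open>g = (\<Sum>k. c k * x^k)\<close>; its vanishing for all \<open>n\<close> is the profile equation for \<open>g = f'\<close>.\<close>
definition ode_coeff :: "(nat \<Rightarrow> real) \<Rightarrow> nat \<Rightarrow> real" where
  "ode_coeff c n =
     cauchy_conv (diffs c) (\<lambda>k. 2 * c k - (if k = 1 then 1 else 0)) n
     - cauchy_conv (\<lambda>k. c k + (if k = 1 then 1 else 0))
                   (\<lambda>k. (if k = 0 then 1 else 0) + cauchy_conv c c k) n"

lemma ode_coeff_deriv_part_trunc_seq:
  assumes "c 0 = 0" "2 \<le> n"
  shows "cauchy_conv (diffs c) (\<lambda>k. 2 * c k - (if k = 1 then 1 else 0)) n
       - cauchy_conv (diffs (trunc_seq c n)) (\<lambda>k. 2 * trunc_seq c n k - (if k = 1 then 1 else 0)) n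
       = 2 * c 1 * c n + real n * (2 * c 1 - 1) * c n"
proof -
  let ?t = "trunc_seq c n"
  have "cauchy_conv (diffs c) (\<lambda>k. 2 * c k - (if k = 1 then 1 else 0)) n
       - cauchy_conv (diffs ?t) (\<lambda>k. 2 * ?t k - (if k = 1 then 1 else 0)) n
      = (\<Sum>i\<le>n. (if i = 0 then 2 * c 1 * c n else 0)
               + (if i = n - 1 then real n * (2 * c 1 - 1) * c n else 0))"
    unfolding cauchy_conv_def sum_subtractf[symmetric]
  proof (rule sum.cong[OF refl])
    fix i assume i: "i \<in> {..n}"
    consider "i = 0" | "i = n - 1" | "i = n" | "0 < i" "i < n - 1" using i by force
    then show "diffs c i * (2 * c (n - i) - (if n - i = 1 then 1 else 0))
        - diffs ?t i * (2 * ?t (n - i) - (if n - i = 1 then 1 else 0))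
        = (if i = 0 then 2 * c 1 * c n else 0)
          + (if i = n - 1 then real n * (2 * c 1 - 1) * c n else 0)"
    proof cases
      case 3
      then show ?thesis using assms by (auto simp: trunc_seq_def diffs_def)
    next
      case 2
      then have "n - i = 1" "Suc i = n" using assms by auto
      then show ?thesis using 2 assms by (auto simp: trunc_seq_def diffs_def algebra_simps)
    qed (use assms in \<open>auto simp: trunc_seq_def diffs_def\<close>)
  qed
  also have "\<dots> = 2 * c 1 * c n + real n * (2 * c 1 - 1) * c n"
    using assms by (simp add: sum.distrib)
  finally show ?thesis .
qed

lemma ode_coeff_cubic_part_trunc_seq:
  assumes "c 0 = 0" "2 \<le> n"
  shows "cauchy_conv (\<lambda>k. c k + (if k = 1 then 1 else 0)) (\<lambda>k. (if k = 0 then 1 else 0) + cauchy_conv c c k) n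
       - cauchy_conv (\<lambda>k. trunc_seq c n k + (if k = 1 then 1 else 0))
           (\<lambda>k. (if k = 0 then 1 else 0) + cauchy_conv (trunc_seq c n) (trunc_seq c n) k) n
       = c n"
proof -
  let ?t = "trunc_seq c n"
  have "cauchy_conv (\<lambda>k. c k + (if k = 1 then 1 else 0)) (\<lambda>k. (if k = 0 then 1 else 0) + cauchy_conv c c k) n
       - cauchy_conv (\<lambda>k. ?t k + (if k = 1 then 1 else 0)) (\<lambda>k. (if k = 0 then 1 else 0) + cauchy_conv ?t ?t k) n
      = (\<Sum>i\<le>n. if i = n then c n else 0)"
    unfolding cauchy_conv_diff
  proof (rule sum.cong[OF refl])
    fix i assume i: "i \<in> {..n}"
    have tt: "cauchy_conv ?t ?t (n - i) = cauchy_conv c c (n - i)"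
      using assms(1) by (intro cauchy_conv_trunc_seq) auto
    have c00: "cauchy_conv c c 0 = 0" using assms(1) by (simp add: cauchy_conv_def)
    show "(c i + (if i = 1 then 1 else 0)) * ((if n - i = 0 then 1 else 0) + cauchy_conv c c (n - i))
        - (?t i + (if i = 1 then 1 else 0)) * ((if n - i = 0 then 1 else 0) + cauchy_conv ?t ?t (n - i))
        = (if i = n then c n else 0)"
      using i assms c00 tt by (cases "i = n") (auto simp: trunc_seq_def)
  qed
  also have "\<dots> = c n" by simp
  finally show ?thesis .
qed

lemma ode_coeff_split_top:
  assumes "c 0 = 0" "2 \<le> n"
  shows "ode_coeff c n = ode_coeff (trunc_seq c n) n + real (n + 1) * (2 * c 1 - 1) * c n"
  using ode_coeff_deriv_part_trunc_seq[of c n] ode_coeff_cubic_part_trunc_seq[of c n] assms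
  unfolding ode_coeff_def by (simp add: algebra_simps)

lemma deriv_part_trunc_seq_bound:
  fixes c :: "nat \<Rightarrow> real"
  assumes r: "0 < r" and n: "2 \<le> n" "n \<le> N"
  defines "W \<equiv> \<lambda>k. if 2 \<le> k \<and> k < N then \<bar>c k\<bar> * r^k else 0"
  shows "\<bar>cauchy_conv (diffs (trunc_seq c n)) (\<lambda>k. 2 * trunc_seq c n k - (if k = 1 then 1 else 0)) n\<bar> * r^n
         \<le> 2 * real (n + 1) / r * cauchy_conv W W (n + 1)"
proof -
  let ?t = "trunc_seq c n"
  have W0: "0 \<le> W k" for k using r by (simp add: W_def)
  have term_le: "\<bar>diffs ?t i * (2 * ?t (n - i) - (if n - i = 1 then 1 else 0))\<bar> * r^n
      \<le> 2 * real (n + 1) / r * (W (Suc i) * W (n - i))" if i: "i \<le> n" for i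
  proof -
    consider "i = 0 \<or> i + 1 = n \<or> i = n" | "1 \<le> i" "i + 2 \<le> n" using i n by linarith
    then show ?thesis
    proof cases
      case 1
      then show ?thesis using n r W0 by (auto simp: trunc_seq_def diffs_def)
    next
      case 2
      have t: "?t (Suc i) = c (Suc i)" "?t (n - i) = c (n - i)" "n - i \<noteq> 1"
        using 2 by (auto simp: trunc_seq_def)
      have w: "W (Suc i) = \<bar>c (Suc i)\<bar> * r^Suc i" "W (n - i) = \<bar>c (n - i)\<bar> * r^(n - i)"
        using 2 n by (auto simp: W_def)
      have pw: "r^Suc i * r^(n - i) = r^n * r"
        using 2 by (simp add: power_add[symmetric] power_Suc2[symmetric])
      have "\<bar>diffs ?t i * (2 * ?t (n - i) - (if n - i = 1 then 1 else 0))\<bar> * r^n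
          = 2 * real (Suc i) * (\<bar>c (Suc i)\<bar> * \<bar>c (n - i)\<bar>) * r^n"
        using t(3) by (simp add: diffs_def t(1,2) abs_mult)
      also have "\<dots> = 2 * real (Suc i) / r * (W (Suc i) * W (n - i))"
      proof -
        have "W (Suc i) * W (n - i) = \<bar>c (Suc i)\<bar> * \<bar>c (n - i)\<bar> * (r^Suc i * r^(n - i))"
          unfolding w by (simp only: ac_simps)
        then show ?thesis unfolding pw using r by (simp add: field_simps)
      qed
      also have "\<dots> \<le> 2 * real (n + 1) / r * (W (Suc i) * W (n - i))"
        using i r W0 by (intro mult_right_mono divide_right_mono) (auto intro: mult_nonneg_nonneg)
      finally show ?thesis .
    qed
  qed
  have shift: "(\<Sum>i\<le>n. W (Suc i) * W (n - i)) = cauchy_conv W W (n + 1)"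
    unfolding cauchy_conv_def Suc_eq_plus1[symmetric] sum.atMost_Suc_shift by (simp add: W_def)
  have "\<bar>cauchy_conv (diffs ?t) (\<lambda>k. 2 * ?t k - (if k = 1 then 1 else 0)) n\<bar> * r^n
      \<le> (\<Sum>i\<le>n. \<bar>diffs ?t i * (2 * ?t (n - i) - (if n - i = 1 then 1 else 0))\<bar> * r^n)"
    unfolding sum_distrib_right[symmetric] using r by (intro mult_right_mono abs_cauchy_conv_le_sum) auto
  also have "\<dots> \<le> (\<Sum>i\<le>n. 2 * real (n + 1) / r * (W (Suc i) * W (n - i)))"
    by (intro sum_mono term_le) simp
  also have "\<dots> = 2 * real (n + 1) / r * cauchy_conv W W (n + 1)"
    by (simp only: sum_distrib_left[symmetric] shift)
  finally show ?thesis .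
qed

lemma cubic_part_trunc_seq_bound:
  fixes c :: "nat \<Rightarrow> real"
  assumes r: "0 < r" and n: "2 \<le> n" "n \<le> N"
  defines "V \<equiv> \<lambda>k. if k < N then \<bar>c k\<bar> * r^k else 0"
  defines "X \<equiv> \<lambda>k. V k + (if k = 1 then r else 0)"
  shows "\<bar>cauchy_conv (\<lambda>k. trunc_seq c n k + (if k = 1 then 1 else 0))
            (\<lambda>k. (if k = 0 then 1 else 0) + cauchy_conv (trunc_seq c n) (trunc_seq c n) k) n\<bar> * r^n
         \<le> cauchy_conv X (cauchy_conv V V) n"
proof -
  let ?t = "trunc_seq c n"
  have V0: "0 \<le> V k" for k using r by (simp add: V_def)
  have X0: "0 \<le> X k" for k using r V0[of k] by (simp add: X_def)
  have VV0: "0 \<le> cauchy_conv V V k" for k by (rule cauchy_conv_nonneg[OF V0 V0])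
  have tV: "\<bar>?t k\<bar> * r^k \<le> V k" for k using n r by (auto simp: trunc_seq_def V_def)
  have tX: "\<bar>?t k + (if k = 1 then 1 else 0)\<bar> * r^k \<le> X k" for k
  proof -
    have "\<bar>?t k + (if k = 1 then 1 else 0)\<bar> * r^k \<le> (\<bar>?t k\<bar> + (if k = 1 then 1 else 0)) * r^k"
      using r by (intro mult_right_mono) auto
    also have "\<dots> = \<bar>?t k\<bar> * r^k + (if k = 1 then r else 0)" by (simp add: algebra_simps)
    finally show ?thesis using tV[of k] by (simp add: X_def)
  qed
  have tt: "\<bar>cauchy_conv ?t ?t m\<bar> * r^m \<le> cauchy_conv V V m" for m
  proof -
    have "\<bar>cauchy_conv ?t ?t m\<bar> * r^m = \<bar>cauchy_conv (\<lambda>k. ?t k * r^k) (\<lambda>k. ?t k * r^k) m\<bar>"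
      using r by (simp add: cauchy_conv_mult_power abs_mult)
    also have "\<dots> \<le> cauchy_conv V V m"
      using r tV by (intro order_trans[OF abs_cauchy_conv_le] cauchy_conv_mono) (auto simp: abs_mult)
    finally show ?thesis .
  qed
  have term_le: "\<bar>(?t i + (if i = 1 then 1 else 0))
        * ((if n - i = 0 then 1 else 0) + cauchy_conv ?t ?t (n - i))\<bar> * r^n
      \<le> X i * cauchy_conv V V (n - i)" if i: "i \<le> n" for i
  proof (cases "i = n")
    case True
    then show ?thesis using n X0 VV0 by (simp add: trunc_seq_def mult_nonneg_nonneg)
  next
    case False
    then have "n - i \<noteq> 0" "r^n = r^i * r^(n - i)" using i by (simp_all add: power_add[symmetric])
    then have "\<bar>(?t i + (if i = 1 then 1 else 0))
        * ((if n - i = 0 then 1 else 0) + cauchy_conv ?t ?t (n - i))\<bar> * r^n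
      = (\<bar>?t i + (if i = 1 then 1 else 0)\<bar> * r^i) * (\<bar>cauchy_conv ?t ?t (n - i)\<bar> * r^(n - i))"
      by (simp add: abs_mult ac_simps)
    also have "\<dots> \<le> X i * cauchy_conv V V (n - i)"
      using tX tt r X0 by (intro mult_mono) auto
    finally show ?thesis .
  qed
  have "\<bar>cauchy_conv (\<lambda>k. ?t k + (if k = 1 then 1 else 0))
            (\<lambda>k. (if k = 0 then 1 else 0) + cauchy_conv ?t ?t k) n\<bar> * r^n
      \<le> (\<Sum>i\<le>n. \<bar>(?t i + (if i = 1 then 1 else 0))
                 * ((if n - i = 0 then 1 else 0) + cauchy_conv ?t ?t (n - i))\<bar> * r^n)"
    unfolding sum_distrib_right[symmetric] using r by (intro mult_right_mono abs_cauchy_conv_le_sum) auto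
  also have "\<dots> \<le> cauchy_conv X (cauchy_conv V V) n"
    unfolding cauchy_conv_def[of X] by (intro sum_mono term_le) simp
  finally show ?thesis .
qed

definition init_slope :: real where
  "init_slope = (1 - sqrt 3) / 2"

lemma init_slope_root: "init_slope * (2 * init_slope - 1) = init_slope + 1"
proof -
  have "sqrt 3 * sqrt 3 = (3::real)" by simp
  then show ?thesis unfolding init_slope_def by (simp add: field_simps)
qed

lemma two_init_slope_minus_one: "2 * init_slope - 1 = - sqrt 3"
  by (simp add: init_slope_def field_simps)

lemma abs_init_slope_le: "\<bar>init_slope\<bar> \<le> 37/100"
proof -
  have "sqrt 3 \<le> sqrt ((174/100)^2::real)" by (subst real_sqrt_le_iff) (simp add: power2_eq_square)
  then have "sqrt 3 \<le> 174/100" by simp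
  moreover have "1 \<le> sqrt (3::real)" by simp
  ultimately show ?thesis unfolding init_slope_def by (simp add: abs_if field_simps)
qed

function slope_coeff :: "nat \<Rightarrow> real" where
  "slope_coeff n = (if n = 0 then 0 else if n = 1 then init_slope else
      - ode_coeff (\<lambda>k. if k < n then slope_coeff k else 0) n / (real (n + 1) * (2 * init_slope - 1)))"
  by auto
termination by (relation "Wellfounded.measure id") auto

declare slope_coeff.simps[simp del]

lemma slope_coeff_0 [simp]: "slope_coeff 0 = 0"
  by (simp add: slope_coeff.simps)

lemma slope_coeff_1 [simp]: "slope_coeff (Suc 0) = init_slope"
  by (simp add: slope_coeff.simps)

lemma slope_coeff_eq:
  "2 \<le> n \<Longrightarrow> slope_coeff n = - ode_coeff (trunc_seq slope_coeff n) n / (real (n + 1) * (2 * init_slope - 1))"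
  by (subst slope_coeff.simps) (simp add: trunc_seq_def)

lemma ode_coeff_slope_coeff: "ode_coeff slope_coeff n = 0"
proof -
  consider "n = 0" | "n = 1" | "2 \<le> n" by linarith
  then show ?thesis
  proof cases
    case 1
    then show ?thesis by (simp add: ode_coeff_def cauchy_conv_def diffs_def)
  next
    case 2
    then show ?thesis using init_slope_root
      by (simp add: ode_coeff_def cauchy_conv_def diffs_def algebra_simps)
  next
    case 3
    have "real (n + 1) * (2 * init_slope - 1) \<noteq> 0" using two_init_slope_minus_one by simp
    then show ?thesis
      using ode_coeff_split_top[of slope_coeff n] slope_coeff_eq[OF 3] 3 by (simp add: field_simps)
  qed
qed

lemma abs_slope_coeff_power_le:
  assumes r: "0 < r" and n: "2 \<le> n" "n \<le> N"
  defines "V \<equiv> \<lambda>k. if k < N then \<bar>slope_coeff k\<bar> * r^k else 0"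
  defines "W \<equiv> \<lambda>k. if 2 \<le> k \<and> k < N then \<bar>slope_coeff k\<bar> * r^k else 0"
  defines "X \<equiv> \<lambda>k. V k + (if k = 1 then r else 0)"
  shows "\<bar>slope_coeff n\<bar> * r^n \<le> 2 / r * cauchy_conv W W (n + 1) + cauchy_conv X (cauchy_conv V V) n"
proof -
  let ?t = "trunc_seq slope_coeff n"
  define A where "A = cauchy_conv (diffs ?t) (\<lambda>k. 2 * ?t k - (if k = 1 then 1 else 0)) n"
  define B where "B = cauchy_conv (\<lambda>k. ?t k + (if k = 1 then 1 else 0))
                        (\<lambda>k. (if k = 0 then 1 else 0) + cauchy_conv ?t ?t k) n"
  have A: "\<bar>A\<bar> * r^n \<le> 2 * real (n + 1) / r * cauchy_conv W W (n + 1)"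
    unfolding A_def W_def using deriv_part_trunc_seq_bound[OF r n] .
  have B: "\<bar>B\<bar> * r^n \<le> cauchy_conv X (cauchy_conv V V) n"
    unfolding B_def X_def V_def using cubic_part_trunc_seq_bound[OF r n] .
  have XVV0: "0 \<le> cauchy_conv X (cauchy_conv V V) n"
    using r by (intro cauchy_conv_nonneg) (auto simp: X_def V_def)
  have "\<bar>slope_coeff n\<bar> * r^n = \<bar>A - B\<bar> * r^n / (real (n + 1) * sqrt 3)"
    using slope_coeff_eq[OF n(1)] two_init_slope_minus_one
    by (simp add: ode_coeff_def A_def B_def abs_divide abs_minus_commute)
  also have "\<dots> \<le> \<bar>A - B\<bar> * r^n / real (n + 1)"
    using r by (intro divide_left_mono) (auto intro!: mult_pos_pos)
  also have "\<dots> \<le> (\<bar>A\<bar> * r^n + \<bar>B\<bar> * r^n) / real (n + 1)"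
    using r abs_triangle_ineq4[of A B]
    by (intro divide_right_mono) (simp_all add: mult_right_mono flip: distrib_right)
  also have "\<dots> \<le> (2 * real (n + 1) / r * cauchy_conv W W (n + 1) + cauchy_conv X (cauchy_conv V V) n) / real (n + 1)"
    using A B by (intro divide_right_mono add_mono) auto
  also have "\<dots> = 2 / r * cauchy_conv W W (n + 1) + cauchy_conv X (cauchy_conv V V) n / real (n + 1)"
    by (simp add: field_simps)
  also have "\<dots> \<le> 2 / r * cauchy_conv W W (n + 1) + cauchy_conv X (cauchy_conv V V) n"
    using XVV0 mult_left_mono[of 1 "real (n + 1)" "cauchy_conv X (cauchy_conv V V) n"]
    by (simp add: divide_le_eq)
  finally show ?thesis .
qed

definition scaled_coeff_sum :: "real \<Rightarrow> nat \<Rightarrow> real" where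
  "scaled_coeff_sum r N = (\<Sum>k<N. if 2 \<le> k then \<bar>slope_coeff k\<bar> * r^k else 0)"

lemma scaled_coeff_sum_Suc_le:
  fixes r :: real and N :: nat
  assumes r: "0 < r"
  defines "s \<equiv> scaled_coeff_sum r N"
  shows "scaled_coeff_sum r (Suc N)
         \<le> 2 / r * s^2 + (\<bar>init_slope\<bar> * r + s + r) * (\<bar>init_slope\<bar> * r + s)^2"
proof -
  define V where "V \<equiv> \<lambda>k. if k < N then \<bar>slope_coeff k\<bar> * r^k else 0"
  define W where "W \<equiv> \<lambda>k. if 2 \<le> k \<and> k < N then \<bar>slope_coeff k\<bar> * r^k else 0"
  define X where "X \<equiv> \<lambda>k. V k + (if k = 1 then r else 0)"
  have V0: "0 \<le> V k" and W0: "0 \<le> W k" and X0: "0 \<le> X k" for k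
    using r by (simp_all add: V_def W_def X_def)
  have VV0: "0 \<le> cauchy_conv V V k" and WW0: "0 \<le> cauchy_conv W W k"
    and XVV0: "0 \<le> cauchy_conv X (cauchy_conv V V) k" for k
    using V0 W0 X0 by (auto intro!: cauchy_conv_nonneg)
  have s0: "0 \<le> s" unfolding s_def scaled_coeff_sum_def using r by (intro sum_nonneg) auto
  have sum_W: "(\<Sum>k\<le>M. W k) = s" if "N \<le> M + 1" for M
  proof -
    have "(\<Sum>k\<le>M. W k) = (\<Sum>k<N. W k)"
      by (rule sum.mono_neutral_right) (use that in \<open>auto simp: W_def\<close>)
    also have "\<dots> = s" unfolding s_def scaled_coeff_sum_def W_def by (rule sum.cong) auto
    finally show ?thesis .
  qed
  have sum_V: "(\<Sum>k\<le>N. V k) \<le> \<bar>init_slope\<bar> * r + s"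
  proof -
    have "(\<Sum>k\<le>N. V k) \<le> (\<Sum>k\<le>N. (if k = 1 then \<bar>init_slope\<bar> * r else 0) + W k)"
    proof (rule sum_mono)
      fix k
      show "V k \<le> (if k = 1 then \<bar>init_slope\<bar> * r else 0) + W k"
        using W0[of k] r by (cases "k = 0 \<or> k = 1") (auto simp: V_def W_def)
    qed
    also have "\<dots> = (\<Sum>k\<le>N. (if k = 1 then \<bar>init_slope\<bar> * r else 0)) + s"
      by (simp add: sum.distrib sum_W)
    also have "(\<Sum>k\<le>N. (if k = 1 then \<bar>init_slope\<bar> * r else 0)) \<le> \<bar>init_slope\<bar> * r"
      using r by (simp add: sum.delta)
    finally show ?thesis by simp
  qed
  have sum_X: "(\<Sum>k\<le>N. X k) \<le> \<bar>init_slope\<bar> * r + s + r"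
    using sum_V r by (simp add: X_def sum.distrib sum.delta)
  have "scaled_coeff_sum r (Suc N) \<le> (\<Sum>n\<le>N. 2 / r * cauchy_conv W W (Suc n) + cauchy_conv X (cauchy_conv V V) n)"
    unfolding scaled_coeff_sum_def lessThan_Suc_atMost
    using abs_slope_coeff_power_le[OF r _ , of _ N] WW0 XVV0 r
    by (intro sum_mono) (auto simp: V_def W_def X_def)
  also have "\<dots> = 2 / r * (\<Sum>n\<le>N. cauchy_conv W W (Suc n)) + (\<Sum>n\<le>N. cauchy_conv X (cauchy_conv V V) n)"
    by (simp add: sum.distrib sum_distrib_left)
  also have "\<dots> \<le> 2 / r * s^2 + (\<bar>init_slope\<bar> * r + s + r) * (\<bar>init_slope\<bar> * r + s)^2"
  proof (intro add_mono mult_left_mono)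
    have "(\<Sum>n\<le>N. cauchy_conv W W (Suc n)) \<le> (\<Sum>m\<le>Suc N. cauchy_conv W W m)"
      unfolding sum.atMost_Suc_shift using WW0[of 0] by simp
    also have "\<dots> \<le> s^2"
      using sum_cauchy_conv_le[of W W "Suc N"] W0 sum_W[of "Suc N"] by (simp add: power2_eq_square)
    finally show "(\<Sum>n\<le>N. cauchy_conv W W (Suc n)) \<le> s^2" .
    have "(\<Sum>n\<le>N. cauchy_conv X (cauchy_conv V V) n) \<le> (\<Sum>k\<le>N. X k) * (\<Sum>k\<le>N. cauchy_conv V V k)"
      by (rule sum_cauchy_conv_le[OF X0 VV0])
    also have "\<dots> \<le> (\<bar>init_slope\<bar> * r + s + r) * ((\<Sum>k\<le>N. V k) * (\<Sum>k\<le>N. V k))"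
      using sum_X sum_cauchy_conv_le[of V V N] V0 r s0
      by (intro mult_mono) (auto intro!: sum_nonneg VV0 X0)
    also have "\<dots> \<le> (\<bar>init_slope\<bar> * r + s + r) * (\<bar>init_slope\<bar> * r + s)^2"
      using sum_V s0 r unfolding power2_eq_square
      by (intro mult_left_mono mult_mono) (auto intro!: sum_nonneg V0)
    finally show "(\<Sum>n\<le>N. cauchy_conv X (cauchy_conv V V) n)
        \<le> (\<bar>init_slope\<bar> * r + s + r) * (\<bar>init_slope\<bar> * r + s)^2" .
  qed (use r in auto)
  finally show ?thesis .
qed

lemma scaled_coeff_sum_le: "scaled_coeff_sum (1/10) N \<le> 1/1000"
proof (induction N)
  case 0
  then show ?case by (simp add: scaled_coeff_sum_def)
next
  case (Suc N)
  define s where "s = scaled_coeff_sum (1/10) N"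
  define a where "a = \<bar>init_slope\<bar> * (1/10) + s"
  have s: "0 \<le> s" "s \<le> 1/1000"
    using Suc.IH unfolding s_def scaled_coeff_sum_def by (auto intro!: sum_nonneg)
  have a: "0 \<le> a" "a \<le> 38/1000" using s abs_init_slope_le unfolding a_def by auto
  have "a * a \<le> (38/1000) * (38/1000)" using a by (intro mult_mono) auto
  moreover have "(a + 1/10) * (a * a) \<le> (138/1000) * ((38/1000) * (38/1000))"
    using a calculation by (intro mult_mono) auto
  moreover have "s * s \<le> (1/1000) * (1/1000)" using s by (intro mult_mono) auto
  ultimately have "2 / (1/10) * s^2 + (a + 1/10) * a^2 \<le> 1/1000"
    by (simp add: power2_eq_square)
  then show ?case
    using scaled_coeff_sum_Suc_le[of "1/10" N] unfolding s_def[symmetric] a_def by (simp add: add.assoc)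
qed

lemma abs_slope_coeff_le: "\<bar>slope_coeff k\<bar> \<le> 10^k"
proof -
  have "\<bar>slope_coeff k\<bar> * (1/10)^k \<le> 1"
  proof (cases "2 \<le> k")
    case True
    then have "\<bar>slope_coeff k\<bar> * (1/10)^k = (if 2 \<le> k then \<bar>slope_coeff k\<bar> * (1/10)^k else 0)"
      by simp
    also have "\<dots> \<le> scaled_coeff_sum (1/10) (Suc k)"
      unfolding scaled_coeff_sum_def by (rule member_le_sum) auto
    finally have "\<bar>slope_coeff k\<bar> * (1/10)^k \<le> scaled_coeff_sum (1/10) (Suc k)" .
    then show ?thesis using scaled_coeff_sum_le[of "Suc k"] by simp
  next
    case False
    then have "k = 0 \<or> k = 1" by auto
    then show ?thesis using abs_init_slope_le by auto
  qed
  then show ?thesis by (simp add: power_divide field_simps)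
qed

lemma summable_powser_geometric_bound:
  fixes c :: "nat \<Rightarrow> real"
  assumes c: "\<And>k. \<bar>c k\<bar> \<le> M * B^k" and x: "\<bar>B * x\<bar> < 1"
  shows "summable (\<lambda>k. c k * x^k)"
proof (rule summable_comparison_test'[of "\<lambda>k. M * (B * \<bar>x\<bar>)^k" 0])
  show "summable (\<lambda>k. M * (B * \<bar>x\<bar>)^k)"
    using x by (intro summable_mult summable_geometric) (simp add: abs_mult)
  show "norm (c k * x^k) \<le> M * (B * \<bar>x\<bar>)^k" for k
    using mult_right_mono[OF c[of k], of "\<bar>x\<bar>^k"]
    by (simp add: abs_mult power_abs power_mult_distrib mult.assoc)
qed

lemma powser_cauchy_conv_sums:
  fixes u v :: "nat \<Rightarrow> real"
  assumes u: "\<And>y. \<bar>y\<bar> < R \<Longrightarrow> (\<lambda>k. u k * y^k) sums U y"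
    and v: "\<And>y. \<bar>y\<bar> < R \<Longrightarrow> (\<lambda>k. v k * y^k) sums V y"
    and x: "\<bar>x\<bar> < R"
  shows "(\<lambda>k. cauchy_conv u v k * x^k) sums (U x * V x)"
proof -
  have abs_summable: "summable (\<lambda>k. norm (w k * x^k))"
    if "\<And>y. \<bar>y\<bar> < R \<Longrightarrow> (\<lambda>k. w k * y^k) sums W y" for w :: "nat \<Rightarrow> real" and W
  proof -
    have "\<bar>(\<bar>x\<bar> + R) / 2\<bar> < R" "norm x < norm ((\<bar>x\<bar> + R) / 2)" using x by auto
    then show ?thesis using powser_insidea[of w] that sums_summable by (metis abs_less_iff less_trans)
  qed
  have "(\<lambda>k. \<Sum>i\<le>k. (u i * x^i) * (v (k - i) * x^(k - i)))
          sums ((\<Sum>k. u k * x^k) * (\<Sum>k. v k * x^k))"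
    by (rule Cauchy_product_sums[OF abs_summable[OF u] abs_summable[OF v]])
  moreover have "(\<Sum>i\<le>k. (u i * x^i) * (v (k - i) * x^(k - i))) = cauchy_conv u v k * x^k" for k
    using cauchy_conv_mult_power[of u x v k] by (simp add: cauchy_conv_def)
  ultimately show ?thesis using u[OF x] v[OF x] by (simp add: sums_unique[symmetric])
qed

definition profile_coeff :: "nat \<Rightarrow> real" where
  "profile_coeff k = (if k = 0 then 0 else slope_coeff (k - 1) / real k)"

lemma diffs_profile_coeff: "diffs profile_coeff = slope_coeff"
  by (rule ext) (simp add: diffs_def profile_coeff_def)

lemma abs_profile_coeff_le: "\<bar>profile_coeff k\<bar> \<le> 10^k"
proof (cases k)
  case (Suc m)
  have "\<bar>slope_coeff m\<bar> * 1 \<le> \<bar>slope_coeff m\<bar> * real (Suc m)"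
    by (intro mult_left_mono) auto
  then have "\<bar>slope_coeff m\<bar> / real (Suc m) \<le> \<bar>slope_coeff m\<bar>"
    by (simp add: divide_le_eq)
  also have "\<dots> \<le> 10^k" using abs_slope_coeff_le[of m] Suc by simp
  finally show ?thesis using Suc by (simp add: profile_coeff_def)
qed (simp add: profile_coeff_def)

definition profile_deriv :: "nat \<Rightarrow> real \<Rightarrow> real" where
  "profile_deriv n x = (\<Sum>k. (diffs ^^ n) profile_coeff k * x^k)"

lemma summable_profile_deriv: "\<bar>x\<bar> < 1/10 \<Longrightarrow> summable (\<lambda>k. (diffs ^^ n) profile_coeff k * x^k)"
proof (induction n arbitrary: x)
  case 0
  then show ?case
    using summable_powser_geometric_bound[of profile_coeff 1 10 x] abs_profile_coeff_le by simp
next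
  case (Suc n)
  have "summable (\<lambda>k. diffs ((diffs ^^ n) profile_coeff) k * x^k)"
    by (rule termdiff_converges[where K = "1/10"]) (use Suc in auto)
  then show ?case by simp
qed

lemma profile_deriv_DERIV:
  "\<bar>x\<bar> < 1/10 \<Longrightarrow> (profile_deriv n has_real_derivative profile_deriv (Suc n) x) (at x)"
  unfolding profile_deriv_def
  using termdiffs_strong'[of "1/10" "(diffs ^^ n) profile_coeff" x] summable_profile_deriv by simp

lemma profile_deriv_1_sums:
  "\<bar>x\<bar> < 1/10 \<Longrightarrow> (\<lambda>k. slope_coeff k * x^k) sums profile_deriv 1 x"
  using summable_profile_deriv[of x 1] by (simp add: profile_deriv_def diffs_profile_coeff summable_sums)

lemma profile_deriv_2_sums:
  "\<bar>x\<bar> < 1/10 \<Longrightarrow> (\<lambda>k. diffs slope_coeff k * x^k) sums profile_deriv 2 x"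
  using summable_profile_deriv[of x 2]
  by (simp add: profile_deriv_def numeral_2_eq_2 diffs_profile_coeff summable_sums)

lemma profile_deriv_1_at_0: "profile_deriv 1 0 = 0"
  by (simp add: profile_deriv_def diffs_profile_coeff)

lemma profile_ode:
  assumes x: "\<bar>x\<bar> < 1/10"
  defines "g \<equiv> profile_deriv 1"
  shows "profile_deriv 2 x * (2 * g x - x) = (x + g x) * (1 + (g x)^2)"
proof -
  let ?c = slope_coeff
  have delta: "(\<lambda>k. (if k = j then 1 else 0) * y^k) sums (y^j)" for j and y :: real
    using powser_sums_if[of j y] by simp
  have c: "(\<lambda>k. ?c k * y^k) sums g y" if "\<bar>y\<bar> < 1/10" for y
    unfolding g_def using profile_deriv_1_sums[OF that] .
  have lin: "(\<lambda>k. (2 * ?c k - (if k = 1 then 1 else 0)) * y^k) sums (2 * g y - y)"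
    if "\<bar>y\<bar> < 1/10" for y
    using sums_diff[OF sums_mult[OF c[OF that], of 2] delta[of 1 y]] by (simp add: algebra_simps)
  have shift: "(\<lambda>k. (?c k + (if k = 1 then 1 else 0)) * y^k) sums (g y + y)"
    if "\<bar>y\<bar> < 1/10" for y
    using sums_add[OF c[OF that] delta[of 1 y]] by (simp add: algebra_simps)
  have quad: "(\<lambda>k. ((if k = 0 then 1 else 0) + cauchy_conv ?c ?c k) * y^k) sums (1 + g y * g y)"
    if "\<bar>y\<bar> < 1/10" for y
    using sums_add[OF delta[of 0 y] powser_cauchy_conv_sums[OF c c that]] by (simp add: algebra_simps)
  have coeff: "cauchy_conv (diffs ?c) (\<lambda>k. 2 * ?c k - (if k = 1 then 1 else 0)) k
      = cauchy_conv (\<lambda>k. ?c k + (if k = 1 then 1 else 0))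
          (\<lambda>k. (if k = 0 then 1 else 0) + cauchy_conv ?c ?c k) k" for k
    using ode_coeff_slope_coeff[of k] by (simp add: ode_coeff_def)
  have "profile_deriv 2 x * (2 * g x - x) = (g x + x) * (1 + g x * g x)"
    using powser_cauchy_conv_sums[OF profile_deriv_2_sums lin x, unfolded coeff]
      powser_cauchy_conv_sums[OF shift quad x]
    by (rule sums_unique2)
  then show ?thesis by (simp add: power2_eq_square algebra_simps)
qed

lemma vector3_eq_iff: "(vector [a, b, c] :: real^3) = vector [a', b', c'] \<longleftrightarrow> a = a' \<and> b = b' \<and> c = c'"
  by (simp add: vec_eq_iff forall_3)

lemma inner_vector3: "(vector [a, b, c] :: real^3) \<bullet> vector [a', b', c'] = a * a' + b * b' + c * c'"
  by (simp add: inner_vec_def sum_3)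

lemma scaleR_vector3: "r *\<^sub>R (vector [a, b, c] :: real^3) = vector [r * a, r * b, r * c]"
  by (simp add: vec_eq_iff forall_3)

lemma add_vector3: "(vector [a, b, c] :: real^3) + vector [a', b', c'] = vector [a + a', b + b', c + c']"
  by (simp add: vec_eq_iff forall_3)

lemma cross3_vector3:
  "cross3 (vector [a, b, c]) (vector [a', b', c']) = vector [b * c' - c * b', c * a' - a * c', a * b' - b * a']"
  by (simp add: cross3_def vec_eq_iff forall_3)

lemma has_vector_derivative_vector3:
  assumes "(f1 has_real_derivative d1) F" "(f2 has_real_derivative d2) F" "(f3 has_real_derivative d3) F"
  shows "((\<lambda>s. vector [f1 s, f2 s, f3 s] :: real^3) has_vector_derivative vector [d1, d2, d3]) F"
proof -
  have decomp: "(vector [a, b, c] :: real^3) = a *\<^sub>R vector [1, 0, 0] + b *\<^sub>R vector [0, 1, 0] + c *\<^sub>R vector [0, 0, 1]"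
    for a b c by (simp add: vec_eq_iff forall_3)
  have "((\<lambda>s. f1 s *\<^sub>R (vector [1, 0, 0] :: real^3) + f2 s *\<^sub>R vector [0, 1, 0] + f3 s *\<^sub>R vector [0, 0, 1])
      has_vector_derivative (d1 *\<^sub>R vector [1, 0, 0] + d2 *\<^sub>R vector [0, 1, 0] + d3 *\<^sub>R vector [0, 0, 1])) F"
    using assms unfolding has_real_derivative_iff_has_vector_derivative
    by (intro has_vector_derivative_add bounded_linear.has_vector_derivative[OF bounded_linear_scaleR_left])
  then show ?thesis by (simp only: decomp[symmetric])
qed

definition rot_tangent_u :: "(real \<Rightarrow> real) \<Rightarrow> real \<Rightarrow> real \<Rightarrow> real^3" where
  "rot_tangent_u f' u v = vector [cos v, sin v, f' u]"

definition rot_tangent_v :: "real \<Rightarrow> real \<Rightarrow> real^3" where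
  "rot_tangent_v u v = vector [- u * sin v, u * cos v, 0]"

definition rot_normal :: "(real \<Rightarrow> real) \<Rightarrow> real \<Rightarrow> real \<Rightarrow> real^3" where
  "rot_normal f' u v = vector [- f' u * cos v, - f' u * sin v, 1]"

lemma inner_rot_frame:
  "(\<alpha> *\<^sub>R rot_tangent_u f' u v + \<beta> *\<^sub>R rot_tangent_v u v) \<bullet> (a *\<^sub>R rot_tangent_u f' u v + b *\<^sub>R rot_tangent_v u v)
     = \<alpha> * a * (1 + (f' u)^2) + \<beta> * b * u^2"
proof -
  have "(\<alpha> * cos v + \<beta> * (- u * sin v)) * (a * cos v + b * (- u * sin v))
        + (\<alpha> * sin v + \<beta> * (u * cos v)) * (a * sin v + b * (u * cos v)) + (\<alpha> * f' u + \<beta> * 0) * (a * f' u + b * 0)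
      = (\<alpha> * a + \<beta> * b * u^2) * (cos v * cos v + sin v * sin v) + \<alpha> * a * (f' u)^2"
    by algebra
  then show ?thesis
    unfolding rot_tangent_u_def rot_tangent_v_def scaleR_vector3 add_vector3 inner_vector3
    by (simp add: algebra_simps)
qed

lemma inner_rot_normal:
  "(\<alpha> *\<^sub>R rot_tangent_u f' u v + \<beta> *\<^sub>R rot_tangent_v u v + \<gamma> *\<^sub>R rot_normal f' u v) \<bullet> rot_normal f' u v
     = \<gamma> * (1 + (f' u)^2)"
proof -
  have "(\<alpha> * cos v + \<beta> * (- u * sin v) + \<gamma> * (- f' u * cos v)) * (- f' u * cos v)
        + (\<alpha> * sin v + \<beta> * (u * cos v) + \<gamma> * (- f' u * sin v)) * (- f' u * sin v)
        + (\<alpha> * f' u + \<beta> * 0 + \<gamma> * 1) * 1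
      = (\<gamma> * (f' u)^2 - \<alpha> * f' u) * (cos v * cos v + sin v * sin v) + \<alpha> * f' u + \<gamma>"
    by algebra
  then show ?thesis
    unfolding rot_tangent_u_def rot_tangent_v_def rot_normal_def scaleR_vector3 add_vector3 inner_vector3
    by (simp add: algebra_simps)
qed

lemma cross3_rot_frame: "cross3 (rot_tangent_u f' u v) (rot_tangent_v u v) = u *\<^sub>R rot_normal f' u v"
proof -
  have "cos v * (u * cos v) - sin v * (- u * sin v) = u * (cos v * cos v + sin v * sin v)" by algebra
  then show ?thesis
    unfolding rot_tangent_u_def rot_tangent_v_def rot_normal_def cross3_vector3 scaleR_vector3 vector3_eq_iff
    by simp
qed

lemma norm_rot_normal: "norm (rot_normal f' u v) = sqrt (1 + (f' u)^2)"
  using inner_rot_normal[of 0 f' u v 0 1] by (simp add: norm_eq_sqrt_inner)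

text \<open>The coefficients of \<open>\<nabla>\<^bsub>a X\<^sub>u + b X\<^sub>v\<^esub> (\<alpha> X\<^sub>u + \<beta> X\<^sub>v)\<close> in the frame
  \<open>X\<^sub>u, X\<^sub>v\<close>, for coefficients depending on \<open>u\<close> only, whose values and \<open>u\<close>-derivatives at
  the point are \<open>\<alpha>, \<beta>\<close> and \<open>\<alpha>', \<beta>'\<close>; here \<open>P = f' u\<close>, \<open>Q = f'' u\<close>.  The last summands come from the
  snm-term \<open>\<langle>C, \<alpha> X\<^sub>u + \<beta> X\<^sub>v\<rangle> (a X\<^sub>u + b X\<^sub>v)\<close> with \<open>\<langle>C, X\<^sub>u\<rangle> = P\<close>, \<open>\<langle>C, X\<^sub>v\<rangle> = 0\<close>.\<close>
definition conn_coeff_u :: "real \<Rightarrow> real \<Rightarrow> real \<Rightarrow> real \<Rightarrow> real \<Rightarrow> real \<Rightarrow> real \<Rightarrow> real \<Rightarrow> real" where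
  "conn_coeff_u P Q a b \<alpha> \<alpha>' \<beta> u = a * (\<alpha>' + \<alpha> * P * Q / (1 + P^2)) - b * \<beta> * u / (1 + P^2) + a * P * \<alpha>"

definition conn_coeff_v :: "real \<Rightarrow> real \<Rightarrow> real \<Rightarrow> real \<Rightarrow> real \<Rightarrow> real \<Rightarrow> real \<Rightarrow> real" where
  "conn_coeff_v P a b \<alpha> \<beta> \<beta>' u = a * (\<beta>' + \<beta> / u) + b * \<alpha> / u + b * P * \<alpha>"

definition conn_coeff_u_deriv :: "real \<Rightarrow> real \<Rightarrow> real \<Rightarrow> real \<Rightarrow> real \<Rightarrow> real \<Rightarrow> real \<Rightarrow> real \<Rightarrow> real" where
  "conn_coeff_u_deriv P Q R a b a' b' u =
     a * a' * ((Q * Q + P * R) * (1 + P^2) - P * Q * (2 * P * Q)) / (1 + P^2)^2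
     - b * b' * ((1 + P^2) - u * (2 * P * Q)) / (1 + P^2)^2 + a * a' * Q"

definition conn_coeff_v_deriv :: "real \<Rightarrow> real \<Rightarrow> real \<Rightarrow> real \<Rightarrow> real \<Rightarrow> real \<Rightarrow> real \<Rightarrow> real" where
  "conn_coeff_v_deriv P Q a b a' b' u = - a * b' / u^2 - b * a' / u^2 + b * a' * Q"

definition curv_inner_expr :: "real \<Rightarrow> real \<Rightarrow> real \<Rightarrow> real \<Rightarrow> real \<Rightarrow> real \<Rightarrow> real \<Rightarrow> real \<Rightarrow> real" where
  "curv_inner_expr P Q R u a b c d =
    (conn_coeff_u P Q a b (conn_coeff_u P Q c d c 0 d u) (conn_coeff_u_deriv P Q R c d c d u) (conn_coeff_v P c d c d 0 u) u
     - conn_coeff_u P Q c d (conn_coeff_u P Q a b c 0 d u) (conn_coeff_u_deriv P Q R a b c d u) (conn_coeff_v P a b c d 0 u) u)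
      * a * (1 + P^2)
    + (conn_coeff_v P a b (conn_coeff_u P Q c d c 0 d u) (conn_coeff_v P c d c d 0 u) (conn_coeff_v_deriv P Q c d c d u) u
     - conn_coeff_v P c d (conn_coeff_u P Q a b c 0 d u) (conn_coeff_v P a b c d 0 u) (conn_coeff_v_deriv P Q a b c d u) u)
      * b * u^2"

text \<open>A Gauss equation for the snm-connection in the basis \<open>e\<^sub>1 = a X\<^sub>u + b X\<^sub>v\<close>,
  \<open>e\<^sub>2 = c X\<^sub>u + d X\<^sub>v\<close>: \<open>p\<^sub>i = \<langle>C, e\<^sub>i\<rangle>\<close>, \<open>g\<close> is the first fundamental form and \<open>H\<close> is
  \<open>\<surd>(1 + P\<^sup>2)\<close> times the second fundamental form \<open>h\<close>.  For an orthonormal basis it reads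
  \<open>K = det h + (p\<^sub>1\<^sup>2 + p\<^sub>2\<^sup>2) / 2 - \<langle>C, N\<rangle> tr h / 2\<close>.\<close>
definition sect_curv_formula :: "real \<Rightarrow> real \<Rightarrow> real \<Rightarrow> real \<Rightarrow> real \<Rightarrow> real \<Rightarrow> real \<Rightarrow> real" where
  "sect_curv_formula P Q u a b c d =
    (let p1 = a * P; p2 = c * P; W = 1 + P^2;
         g11 = a^2 * W + b^2 * u^2; g22 = c^2 * W + d^2 * u^2; g12 = a * c * W + b * d * u^2;
         H11 = a^2 * Q + b^2 * u * P; H22 = c^2 * Q + d^2 * u * P; H12 = a * c * Q + b * d * u * P
     in (1/2) * (p2 * (p2 * g11 - p1 * g12) + p1 * (p1 * g22 - p2 * g12) + 2 * (H11 * H22 - H12^2) / W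
                 - (H22 * g11 - 2 * H12 * g12 + H11 * g22) / W))"

lemma curv_inner_expr_symm:
  assumes "u \<noteq> 0"
  shows "(1/2) * (curv_inner_expr P Q R u a b c d + curv_inner_expr P Q R u c d a b)
         = sect_curv_formula P Q u a b c d"
proof -
  define iu where "iu = inverse u"
  define iw where "iw = inverse (1 + P^2)"
  have "u * iu = 1" "(1 + P^2) * iw = 1"
    using assms by (simp_all add: iu_def iw_def add_pos_nonneg add_nonneg_eq_0_iff)
  then show ?thesis
    unfolding curv_inner_expr_def sect_curv_formula_def Let_def conn_coeff_u_def conn_coeff_v_def
      conn_coeff_u_deriv_def conn_coeff_v_deriv_def
      divide_inverse power_inverse[symmetric] iu_def[symmetric] iw_def[symmetric]
    by algebra
qed

lemma sect_curv_formula_eq_half: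
  assumes "u \<noteq> 0"
    and "a * a * (1 + P^2) + b * b * u^2 = 1" "c * c * (1 + P^2) + d * d * u^2 = 1"
    and "a * c * (1 + P^2) + b * d * u^2 = 0"
    and ode: "Q * (2 * P - u) = (u + P) * (1 + P^2)"
  shows "sect_curv_formula P Q u a b c d = 1/2"
proof -
  define iu where "iu = inverse u"
  define iw where "iw = inverse (1 + P^2)"
  have "u * iu = 1" "(1 + P^2) * iw = 1"
    using assms(1) by (simp_all add: iu_def iw_def add_pos_nonneg add_nonneg_eq_0_iff)
  then show ?thesis
    unfolding sect_curv_formula_def Let_def divide_inverse iw_def[symmetric]
    using assms by algebra
qed

locale rotation_profile =
  fixes f f' f'' f''' :: "real \<Rightarrow> real" and U :: "real set"
  assumes open_U: "open U" and pos_U: "\<And>u. u \<in> U \<Longrightarrow> 0 < u"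
    and DERIV_f: "\<And>u. u \<in> U \<Longrightarrow> (f has_real_derivative f' u) (at u)"
    and DERIV_f': "\<And>u. u \<in> U \<Longrightarrow> (f' has_real_derivative f'' u) (at u)"
    and DERIV_f'': "\<And>u. u \<in> U \<Longrightarrow> (f'' has_real_derivative f''' u) (at u)"
begin

abbreviation "X \<equiv> rot_surface f"

lemma pd1_rot_surface: "u \<in> U \<Longrightarrow> pd1 X u v = rot_tangent_u f' u v"
  unfolding pd1_def rot_surface_def rot_tangent_u_def
  by (intro vector_derivative_at has_vector_derivative_vector3) (auto intro!: derivative_eq_intros DERIV_f)

lemma pd2_rot_surface: "pd2 X u v = rot_tangent_v u v"
  unfolding pd2_def rot_surface_def rot_tangent_v_def
  by (intro vector_derivative_at has_vector_derivative_vector3) (auto intro!: derivative_eq_intros)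

lemma coord_field_rot_surface:
  "u \<in> U \<Longrightarrow> coord_field X a b u v = a *\<^sub>R rot_tangent_u f' u v + b *\<^sub>R rot_tangent_v u v"
  unfolding coord_field_def pd1_rot_surface pd2_rot_surface by simp

lemma unit_normal_rot_surface:
  "u \<in> U \<Longrightarrow> unit_normal X u v = (1 / sqrt (1 + (f' u)^2)) *\<^sub>R rot_normal f' u v"
  using pos_U[of u] by (simp add: unit_normal_def pd1_rot_surface pd2_rot_surface cross3_rot_frame norm_rot_normal)

lemma tang_rot_surface:
  assumes "u \<in> U"
  shows "tang X u v (\<alpha> *\<^sub>R rot_tangent_u f' u v + \<beta> *\<^sub>R rot_tangent_v u v + \<gamma> *\<^sub>R rot_normal f' u v)
         = \<alpha> *\<^sub>R rot_tangent_u f' u v + \<beta> *\<^sub>R rot_tangent_v u v"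
proof -
  have "0 < 1 + (f' u)^2" by (simp add: add_pos_nonneg)
  then show ?thesis
    unfolding tang_def unit_normal_rot_surface[OF assms] inner_scaleR_right inner_rot_normal
    by (simp add: real_sqrt_mult[symmetric] power2_eq_square[symmetric])
qed

lemma pd1_frame_field:
  assumes u: "u \<in> U"
    and W: "\<forall>s\<in>U. \<forall>t. W s t = \<alpha> s *\<^sub>R rot_tangent_u f' s t + \<beta> s *\<^sub>R rot_tangent_v s t"
    and "(\<alpha> has_real_derivative \<alpha>') (at u)" "(\<beta> has_real_derivative \<beta>') (at u)"
  shows "pd1 W u v = (\<alpha> u *\<^sub>R vector [0, 0, f'' u] + \<alpha>' *\<^sub>R rot_tangent_u f' u v)
                     + (\<beta> u *\<^sub>R vector [- sin v, cos v, 0] + \<beta>' *\<^sub>R rot_tangent_v u v)"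
  unfolding pd1_def
proof (rule vector_derivative_at, rule has_vector_derivative_transform_within_open[OF _ open_U u])
  show "((\<lambda>s. \<alpha> s *\<^sub>R rot_tangent_u f' s v + \<beta> s *\<^sub>R rot_tangent_v s v) has_vector_derivative
      (\<alpha> u *\<^sub>R vector [0, 0, f'' u] + \<alpha>' *\<^sub>R rot_tangent_u f' u v)
      + (\<beta> u *\<^sub>R vector [- sin v, cos v, 0] + \<beta>' *\<^sub>R rot_tangent_v u v)) (at u)"
    unfolding rot_tangent_u_def rot_tangent_v_def using assms(3,4)
    by (intro has_vector_derivative_add has_vector_derivative_scaleR has_vector_derivative_vector3)
       (auto intro!: derivative_eq_intros DERIV_f'[OF u])
qed (simp add: W)

lemma pd2_frame_field:
  assumes "u \<in> U"
    and W: "\<forall>s\<in>U. \<forall>t. W s t = \<alpha> s *\<^sub>R rot_tangent_u f' s t + \<beta> s *\<^sub>R rot_tangent_v s t"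
  shows "pd2 W u v = \<alpha> u *\<^sub>R vector [- sin v, cos v, 0] + \<beta> u *\<^sub>R vector [- u * cos v, - u * sin v, 0]"
  unfolding pd2_def W[rule_format, OF assms(1)] rot_tangent_u_def rot_tangent_v_def
  by (intro vector_derivative_at has_vector_derivative_add has_vector_derivative_vector3
      bounded_linear.has_vector_derivative[OF bounded_linear_scaleR_right])
     (auto intro!: derivative_eq_intros)

lemma ind_conn_frame_field:
  assumes u: "u \<in> U"
    and W: "\<forall>s\<in>U. \<forall>t. W s t = \<alpha> s *\<^sub>R rot_tangent_u f' s t + \<beta> s *\<^sub>R rot_tangent_v s t"
    and "(\<alpha> has_real_derivative \<alpha>') (at u)" "(\<beta> has_real_derivative \<beta>') (at u)"
  shows "ind_conn e_z X a b W u v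
         = conn_coeff_u (f' u) (f'' u) a b (\<alpha> u) \<alpha>' (\<beta> u) u *\<^sub>R rot_tangent_u f' u v
           + conn_coeff_v (f' u) a b (\<alpha> u) (\<beta> u) \<beta>' u *\<^sub>R rot_tangent_v u v"
proof -
  define P2 where "P2 = 1 + (f' u)^2"
  have pos: "0 < u" "P2 \<noteq> 0" using pos_U[OF u] by (simp_all add: P2_def add_pos_nonneg add_nonneg_eq_0_iff)
  have C: "e_z (X u v) \<bullet> W u v = \<alpha> u * f' u"
    unfolding W[rule_format, OF u] e_z_def rot_tangent_u_def rot_tangent_v_def scaleR_vector3 add_vector3 inner_vector3 by simp
  have "a *\<^sub>R pd1 W u v + b *\<^sub>R pd2 W u v + (e_z (X u v) \<bullet> W u v) *\<^sub>R coord_field X a b u v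
     = conn_coeff_u (f' u) (f'' u) a b (\<alpha> u) \<alpha>' (\<beta> u) u *\<^sub>R rot_tangent_u f' u v
       + conn_coeff_v (f' u) a b (\<alpha> u) (\<beta> u) \<beta>' u *\<^sub>R rot_tangent_v u v
       + ((a * \<alpha> u * f'' u + b * \<beta> u * u * f' u) / P2) *\<^sub>R rot_normal f' u v"
    unfolding pd1_frame_field[OF assms] pd2_frame_field[OF u W] coord_field_rot_surface[OF u] C
      conn_coeff_u_def conn_coeff_v_def P2_def[symmetric]
      rot_tangent_u_def rot_tangent_v_def rot_normal_def scaleR_vector3 add_vector3 vector3_eq_iff
    using pos by (simp add: field_simps) (simp add: P2_def algebra_simps power2_eq_square)
  then show ?thesis unfolding ind_conn_def P2_def by (simp only: tang_rot_surface[OF u])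
qed

lemma ind_conn_coord_field:
  "u \<in> U \<Longrightarrow> ind_conn e_z X c d (coord_field X a b) u v
     = conn_coeff_u (f' u) (f'' u) c d a 0 b u *\<^sub>R rot_tangent_u f' u v
       + conn_coeff_v (f' u) c d a b 0 u *\<^sub>R rot_tangent_v u v"
  by (rule ind_conn_frame_field[of _ _ "\<lambda>_. a" "\<lambda>_. b"]) (auto simp: coord_field_rot_surface)

lemma conn_coeff_u_DERIV:
  assumes u: "u \<in> U"
  shows "((\<lambda>s. conn_coeff_u (f' s) (f'' s) c d a 0 b s) has_real_derivative
           conn_coeff_u_deriv (f' u) (f'' u) (f''' u) c d a b u) (at u)"
proof -
  have pos: "0 < 1 + (f' u)^2" by (simp add: add_pos_nonneg)
  show ?thesis
    unfolding conn_coeff_u_def conn_coeff_u_deriv_def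
    using pos by (auto intro!: derivative_eq_intros DERIV_f'[OF u] DERIV_f''[OF u] simp: power2_eq_square)
                 (simp add: field_simps)
qed

lemma conn_coeff_v_DERIV:
  assumes u: "u \<in> U"
  shows "((\<lambda>s. conn_coeff_v (f' s) c d a b 0 s) has_real_derivative
           conn_coeff_v_deriv (f' u) (f'' u) c d a b u) (at u)"
  unfolding conn_coeff_v_def conn_coeff_v_deriv_def
  using pos_U[OF u] by (auto intro!: derivative_eq_intros DERIV_f'[OF u] simp: field_simps power2_eq_square)

lemma ind_conn_ind_conn_coord_field:
  "u \<in> U \<Longrightarrow> ind_conn e_z X a b (ind_conn e_z X c d (coord_field X a' b')) u v
     = conn_coeff_u (f' u) (f'' u) a b (conn_coeff_u (f' u) (f'' u) c d a' 0 b' u)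
         (conn_coeff_u_deriv (f' u) (f'' u) (f''' u) c d a' b' u) (conn_coeff_v (f' u) c d a' b' 0 u) u
         *\<^sub>R rot_tangent_u f' u v
       + conn_coeff_v (f' u) a b (conn_coeff_u (f' u) (f'' u) c d a' 0 b' u)
         (conn_coeff_v (f' u) c d a' b' 0 u) (conn_coeff_v_deriv (f' u) (f'' u) c d a' b' u) u
         *\<^sub>R rot_tangent_v u v"
  by (rule ind_conn_frame_field[OF _ _ conn_coeff_u_DERIV conn_coeff_v_DERIV]) (auto simp: ind_conn_coord_field)

lemma ind_curv_inner_eq:
  assumes "u \<in> U"
  shows "ind_curv e_z X a b c d (coord_field X c d) u v \<bullet> coord_field X a b u v
         = curv_inner_expr (f' u) (f'' u) (f''' u) u a b c d"
proof -
  have frame_diff: "(x *\<^sub>R E + y *\<^sub>R F) - (x' *\<^sub>R E + y' *\<^sub>R F) = (x - x') *\<^sub>R E + (y - y') *\<^sub>R F"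
    for x y x' y' and E F :: "real^3" by (simp add: algebra_simps)
  show ?thesis
    unfolding ind_curv_def ind_conn_ind_conn_coord_field[OF assms] coord_field_rot_surface[OF assms]
      curv_inner_expr_def frame_diff inner_rot_frame ..
qed

lemma sect_curv_expr_rot_surface:
  "u \<in> U \<Longrightarrow> sect_curv_expr e_z X a b c d u v = sect_curv_formula (f' u) (f'' u) u a b c d"
  using pos_U[of u] curv_inner_expr_symm by (simp add: sect_curv_expr_def ind_curv_inner_eq)

lemma const_sect_curv_rot_surface:
  assumes ode: "\<And>u. u \<in> U \<Longrightarrow> f'' u * (2 * f' u - u) = (u + f' u) * (1 + (f' u)^2)"
  shows "const_sect_curv e_z X (U \<times> UNIV) (1/2)"
  unfolding const_sect_curv_def
proof (clarify)
  fix u v a b c d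
  assume u: "u \<in> U"
  assume "coord_field X a b u v \<bullet> coord_field X a b u v = 1"
    "coord_field X c d u v \<bullet> coord_field X c d u v = 1"
    "coord_field X a b u v \<bullet> coord_field X c d u v = 0"
  then have "a * a * (1 + (f' u)^2) + b * b * u^2 = 1" "c * c * (1 + (f' u)^2) + d * d * u^2 = 1"
    "a * c * (1 + (f' u)^2) + b * d * u^2 = 0"
    unfolding coord_field_rot_surface[OF u] inner_rot_frame by simp_all
  moreover have "u \<noteq> 0" using pos_U[OF u] by simp
  ultimately show "sect_curv_expr e_z X a b c d u v = 1/2"
    unfolding sect_curv_expr_rot_surface[OF u] using sect_curv_formula_eq_half ode[OF u] by blast
qed

end

interpretation profile: rotation_profile
  "profile_deriv 0" "profile_deriv 1" "profile_deriv 2" "profile_deriv 3" "{0<..<1/10}"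
proof
  fix u :: real assume "u \<in> {0<..<1/10}"
  then have "\<bar>u\<bar> < 1/10" by auto
  from profile_deriv_DERIV[OF this]
  show "(profile_deriv 0 has_real_derivative profile_deriv 1 u) (at u)"
    and "(profile_deriv 1 has_real_derivative profile_deriv 2 u) (at u)"
    and "(profile_deriv 2 has_real_derivative profile_deriv 3 u) (at u)"
    by (simp_all add: numeral_3_eq_3 numeral_2_eq_2)
qed auto

theorem theorem4p5:
  shows "\<exists>eps > 0. \<exists>f :: real \<Rightarrow> real. \<exists>Df.
           smooth_upto0 eps f Df \<and> Df 1 0 = 0 \<and>
           const_sect_curv e_z (rot_surface f) ({0<..<eps} \<times> UNIV) (1/2)"
proof (intro exI conjI)
  show "(0::real) < 1/10" by simp
  show "smooth_upto0 (1/10) (profile_deriv 0) profile_deriv"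
    unfolding smooth_upto0_def
    by (auto intro!: has_field_derivative_at_within profile_deriv_DERIV)
  show "profile_deriv 1 0 = 0" by (rule profile_deriv_1_at_0)
  show "const_sect_curv e_z (rot_surface (profile_deriv 0)) ({0<..<1/10} \<times> UNIV) (1/2)"
    by (rule profile.const_sect_curv_rot_surface, rule profile_ode) auto
qed

end
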